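(* Let $x^*=\{x_i^{*t}\}$ be the output of the greedy fractional algorithm and let $y=\{y_i^t\}$ be an arbitrary fractional allocation. Then for every block $t$, $$\sum_i x_i^{*t}v_i^t\ge\sum_i\big(1-X_i^{*t-1}\big)y_i^tv_i^t,$$ where $X_i^{*t}=\sum_{\tau\le t}x_i^{*\tau}$.
   Context: Online block packing: $m$ resources with capacities $B_j>0$; transactions $i$ with arrival time $a_i\in\{1,2,\dots\}$, base value $v_i\ge0$, discount $\rho_i\in[0,1]$, demand $w_i\in\mathbb{R}_+^m$; $v_i^t:=v_i(1-\rho_i)^{t-a_i}$. A fractional allocation is $\{x_i^t\}$ with $x_i^t\in[0,1]$, $x_i^t=0$ for $t<a_i$, $\sum_tx_i^t\le1$, and $\sum_iw_{ij}x_i^t\le B_j$ for all $t,j$. The greedy fractional algorithm: at each $t=1,2,\dots$ it sets $\{x_i^{*t}\}_i$ to an optimal solution of the LP maximizing $\sum_ix_i^{*t}v_i^t$ subject to $0\le x_i^{*t}\le1-\sum_{\tau<t}x_i^{*\tau}$, $\sum_iw_{ij}x_i^{*t}\le B_j$ for all $j$, and $x_i^{*t}=0$ if $a_i>t$. *)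

theory Defs
  imports Main "HOL.Real"
begin

text \<open>Blocks are t = 1,2,...; transactions form a finite set N; resources a finite set J.\<close>

definition tval :: "('i \<Rightarrow> real) \<Rightarrow> ('i \<Rightarrow> real) \<Rightarrow> ('i \<Rightarrow> nat) \<Rightarrow> 'i \<Rightarrow> nat \<Rightarrow> real" where
  "tval v \<rho> a i t = v i * (1 - \<rho> i) ^ (t - a i)"

definition frac_alloc ::
  "'i set \<Rightarrow> 'r set \<Rightarrow> ('r \<Rightarrow> real) \<Rightarrow> ('i \<Rightarrow> nat) \<Rightarrow> ('i \<Rightarrow> 'r \<Rightarrow> real)
   \<Rightarrow> ('i \<Rightarrow> nat \<Rightarrow> real) \<Rightarrow> bool" where
  "frac_alloc N J B a w y \<longleftrightarrow>
     (\<forall>i\<in>N. \<forall>t\<ge>1. 0 \<le> y i t \<and> y i t \<le> 1) \<and>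
     (\<forall>i\<in>N. \<forall>t\<ge>1. t < a i \<longrightarrow> y i t = 0) \<and>
     (\<forall>i\<in>N. \<forall>T. (\<Sum>t\<in>{1..T}. y i t) \<le> 1) \<and>
     (\<forall>t\<ge>1. \<forall>j\<in>J. (\<Sum>i\<in>N. w i j * y i t) \<le> B j)"

definition greedy_lp_feasible ::
  "'i set \<Rightarrow> 'r set \<Rightarrow> ('r \<Rightarrow> real) \<Rightarrow> ('i \<Rightarrow> nat) \<Rightarrow> ('i \<Rightarrow> 'r \<Rightarrow> real)
   \<Rightarrow> ('i \<Rightarrow> nat \<Rightarrow> real) \<Rightarrow> nat \<Rightarrow> ('i \<Rightarrow> real) \<Rightarrow> bool" where
  "greedy_lp_feasible N J B a w x t z \<longleftrightarrow>
     (\<forall>i\<in>N. 0 \<le> z i \<and> z i \<le> 1 - (\<Sum>\<tau>\<in>{1..<t}. x i \<tau>)) \<and>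
     (\<forall>j\<in>J. (\<Sum>i\<in>N. w i j * z i) \<le> B j) \<and>
     (\<forall>i\<in>N. a i > t \<longrightarrow> z i = 0)"

definition greedy_output ::
  "'i set \<Rightarrow> 'r set \<Rightarrow> ('r \<Rightarrow> real) \<Rightarrow> ('i \<Rightarrow> nat) \<Rightarrow> ('i \<Rightarrow> real) \<Rightarrow> ('i \<Rightarrow> real)
   \<Rightarrow> ('i \<Rightarrow> 'r \<Rightarrow> real) \<Rightarrow> ('i \<Rightarrow> nat \<Rightarrow> real) \<Rightarrow> bool" where
  "greedy_output N J B a v \<rho> w x \<longleftrightarrow>
     (\<forall>t\<ge>1. greedy_lp_feasible N J B a w x t (\<lambda>i. x i t) \<and>
        (\<forall>z. greedy_lp_feasible N J B a w x t z \<longrightarrow>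
           (\<Sum>i\<in>N. z i * tval v \<rho> a i t) \<le> (\<Sum>i\<in>N. x i t * tval v \<rho> a i t)))"

end

theory Submission
  imports Defs
begin

text \<open>Write X i for the total share of transaction i that greedy served before block t.
  Scaling an arbitrary fractional allocation y at block t by the unserved fraction 1 - X i
  gives a feasible point of the greedy LP at block t: it stays below the residual 1 - X i
  because y i t \<le> 1, and it respects the capacities because the factors lie in [0,1] and
  demands are nonnegative. Optimality of the greedy solution at block t bounds its value.\<close>

lemma greedy_output_feasible:
  assumes "greedy_output N J B a v \<rho> w x" and "t \<ge> 1"
  shows "greedy_lp_feasible N J B a w x t (\<lambda>i. x i t)"
  using assms unfolding greedy_output_def by blast

lemma greedy_output_optimal:
  assumes "greedy_output N J B a v \<rho> w x" and "t \<ge> 1"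
    and "greedy_lp_feasible N J B a w x t z"
  shows "(\<Sum>i\<in>N. z i * tval v \<rho> a i t) \<le> (\<Sum>i\<in>N. x i t * tval v \<rho> a i t)"
  using assms unfolding greedy_output_def by blast

lemma greedy_output_nonneg:
  assumes "greedy_output N J B a v \<rho> w x" and "i \<in> N" and "t \<ge> 1"
  shows "0 \<le> x i t"
  using greedy_output_feasible[OF assms(1,3)] assms(2)
  unfolding greedy_lp_feasible_def by blast

lemma greedy_output_history_nonneg:
  assumes "greedy_output N J B a v \<rho> w x" and "i \<in> N"
  shows "0 \<le> (\<Sum>\<tau>\<in>{1..<t}. x i \<tau>)"
  by (rule sum_nonneg) (auto intro: greedy_output_nonneg[OF assms])

lemma greedy_output_history_le_one:
  assumes "greedy_output N J B a v \<rho> w x" and "i \<in> N"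
  shows "(\<Sum>\<tau>\<in>{1..<t}. x i \<tau>) \<le> 1"
proof (cases "t \<le> 1")
  case True
  then show ?thesis by simp
next
  case False
  then obtain s where s: "t = Suc s" "s \<ge> 1"
    by (cases t) auto
  have "x i s \<le> 1 - (\<Sum>\<tau>\<in>{1..<s}. x i \<tau>)"
    using greedy_output_feasible[OF assms(1) s(2)] assms(2)
    unfolding greedy_lp_feasible_def by blast
  then show ?thesis
    using s by (simp add: sum.atLeastLessThan_Suc)
qed

lemma greedy_lp_feasible_residual_scaling:
  assumes "\<forall>i\<in>N. \<forall>j\<in>J. w i j \<ge> 0"
    and "frac_alloc N J B a w y" and "t \<ge> 1"
    and "\<And>i. i \<in> N \<Longrightarrow> 0 \<le> (\<Sum>\<tau>\<in>{1..<t}. x i \<tau>) \<and> (\<Sum>\<tau>\<in>{1..<t}. x i \<tau>) \<le> 1"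
  shows "greedy_lp_feasible N J B a w x t (\<lambda>i. (1 - (\<Sum>\<tau>\<in>{1..<t}. x i \<tau>)) * y i t)"
proof -
  define X where "X i = (\<Sum>\<tau>\<in>{1..<t}. x i \<tau>)" for i
  have X: "0 \<le> X i" "X i \<le> 1" if "i \<in> N" for i
    using assms(4)[OF that] by (simp_all add: X_def)
  have y: "0 \<le> y i t" "y i t \<le> 1" if "i \<in> N" for i
    using assms(2,3) that unfolding frac_alloc_def by blast+
  have "greedy_lp_feasible N J B a w x t (\<lambda>i. (1 - X i) * y i t)"
    unfolding greedy_lp_feasible_def X_def[symmetric]
  proof (intro conjI ballI impI)
    fix i assume i: "i \<in> N"
    show "0 \<le> (1 - X i) * y i t" using X[OF i] y[OF i] by simp
    show "(1 - X i) * y i t \<le> 1 - X i" using X[OF i] y[OF i] by (simp add: mult_left_le)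
    assume "t < a i"
    then show "(1 - X i) * y i t = 0"
      using assms(2,3) i unfolding frac_alloc_def by auto
  next
    fix j assume j: "j \<in> J"
    have "(\<Sum>i\<in>N. w i j * ((1 - X i) * y i t)) \<le> (\<Sum>i\<in>N. w i j * y i t)"
    proof (rule sum_mono)
      fix i assume i: "i \<in> N"
      have "(1 - X i) * y i t \<le> y i t" using X[OF i] y[OF i] by (simp add: algebra_simps)
      then show "w i j * ((1 - X i) * y i t) \<le> w i j * y i t"
        using assms(1) i j by (simp add: mult_left_mono)
    qed
    also have "\<dots> \<le> B j" using assms(2,3) j unfolding frac_alloc_def by blast
    finally show "(\<Sum>i\<in>N. w i j * ((1 - X i) * y i t)) \<le> B j" .
  qed
  then show ?thesis by (simp add: X_def)
qed

theorem lemma1: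
  fixes N :: "'i set" and J :: "'r set"
    and B :: "'r \<Rightarrow> real" and a :: "'i \<Rightarrow> nat"
    and v \<rho> :: "'i \<Rightarrow> real" and w :: "'i \<Rightarrow> 'r \<Rightarrow> real"
    and x y :: "'i \<Rightarrow> nat \<Rightarrow> real" and t :: nat
  assumes "finite N" and "finite J"
    and "\<forall>j\<in>J. B j > 0"
    and "\<forall>i\<in>N. a i \<ge> 1"
    and "\<forall>i\<in>N. v i \<ge> 0"
    and "\<forall>i\<in>N. 0 \<le> \<rho> i \<and> \<rho> i \<le> 1"
    and "\<forall>i\<in>N. \<forall>j\<in>J. w i j \<ge> 0"
    and "greedy_output N J B a v \<rho> w x"
    and "frac_alloc N J B a w y"
    and "t \<ge> 1"
  shows "(\<Sum>i\<in>N. x i t * tval v \<rho> a i t)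
           \<ge> (\<Sum>i\<in>N. (1 - (\<Sum>\<tau>\<in>{1..<t}. x i \<tau>)) * y i t * tval v \<rho> a i t)"
proof -
  have "greedy_lp_feasible N J B a w x t (\<lambda>i. (1 - (\<Sum>\<tau>\<in>{1..<t}. x i \<tau>)) * y i t)"
    using assms(7,9,10) greedy_output_history_nonneg[OF assms(8)]
      greedy_output_history_le_one[OF assms(8)]
    by (intro greedy_lp_feasible_residual_scaling) auto
  then show ?thesis
    using greedy_output_optimal[OF assms(8,10)] by simp
qed

end
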